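(* For every prime power $q>2$ there exist $n\ge3$ and an equidistant linear code $\mathcal{U}\subseteq\mathbb{P}_q(n)$ with $|\mathcal{U}|\ge 2^{n+1}$.
   Context: $\mathbb{P}_q(n)$ denotes the set of all subspaces of $\mathbb{F}_q^n$. For subspaces $X,Y$ the subspace distance is $d_S(X,Y)=\dim X+\dim Y-2\dim(X\cap Y)$. A linear code in $\mathbb{P}_q(n)$ is a subset $\mathcal{U}\subseteq\mathbb{P}_q(n)$ with $\{0\}\in\mathcal{U}$ for which there exists a map $\boxplus:\mathcal{U}\times\mathcal{U}\to\mathcal{U}$ such that (i) $(\mathcal{U},\boxplus)$ is an abelian group; (ii) its identity element is $\{0\}$; (iii) $X\boxplus X=\{0\}$ for all $X\in\mathcal{U}$; (iv) $d_S(Y_1\boxplus X,Y_2\boxplus X)=d_S(Y_1,Y_2)$ for all $Y_1,Y_2,X\in\mathcal{U}$. It is equidistant if there is $r$ with $d_S(X,Y)=r$ for all distinct $X,Y\in\mathcal{U}$. *)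

theory Defs
  imports Complex_Main "HOL-Library.Function_Algebras"
begin

text \<open>Vectors of F_q^n are modelled as functions nat => 'a vanishing outside {0..<n};
  'a is the (finite) field F_q.\<close>

definition fscale :: "'a::field \<Rightarrow> (nat \<Rightarrow> 'a) \<Rightarrow> (nat \<Rightarrow> 'a)" where
  "fscale c v = (\<lambda>i. c * v i)"

lemma vector_space_fscale: "vector_space (fscale :: 'a::field \<Rightarrow> _)"
  unfolding vector_space_def fscale_def by (auto simp: fun_eq_iff algebra_simps)

definition fvec :: "nat \<Rightarrow> (nat \<Rightarrow> 'a::field) set" where
  "fvec n = {v. \<forall>i\<ge>n. v i = 0}"

definition Pq :: "'a::field itself \<Rightarrow> nat \<Rightarrow> (nat \<Rightarrow> 'a) set set" where
  "Pq _ n = {S. S \<subseteq> fvec n \<and> module.subspace (fscale :: 'a \<Rightarrow> _) S}"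

definition sdim :: "(nat \<Rightarrow> 'a::field) set \<Rightarrow> nat" where
  "sdim X = vector_space.dim (fscale :: 'a \<Rightarrow> _) X"

definition dS :: "(nat \<Rightarrow> 'a::field) set \<Rightarrow> (nat \<Rightarrow> 'a) set \<Rightarrow> nat" where
  "dS X Y = sdim X + sdim Y - 2 * sdim (X \<inter> Y)"

definition zero_space :: "(nat \<Rightarrow> 'a::field) set" where
  "zero_space = {(\<lambda>_. 0)}"

definition linear_code :: "'a::field itself \<Rightarrow> nat \<Rightarrow> (nat \<Rightarrow> 'a) set set \<Rightarrow> bool" where
  "linear_code T n U \<longleftrightarrow> U \<subseteq> Pq T n \<and> zero_space \<in> U \<and>
    (\<exists>bp. (\<forall>X\<in>U. \<forall>Y\<in>U. bp X Y \<in> U) \<and>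
      (\<forall>X\<in>U. \<forall>Y\<in>U. \<forall>Z\<in>U. bp (bp X Y) Z = bp X (bp Y Z)) \<and>
      (\<forall>X\<in>U. \<forall>Y\<in>U. bp X Y = bp Y X) \<and>
      (\<forall>X\<in>U. bp zero_space X = X \<and> bp X zero_space = X) \<and>
      (\<forall>X\<in>U. \<exists>Y\<in>U. bp X Y = zero_space) \<and>
      (\<forall>X\<in>U. bp X X = zero_space) \<and>
      (\<forall>Y1\<in>U. \<forall>Y2\<in>U. \<forall>X\<in>U. dS (bp Y1 X) (bp Y2 X) = dS Y1 Y2))"

definition equidistant :: "(nat \<Rightarrow> 'a::field) set set \<Rightarrow> bool" where
  "equidistant U \<longleftrightarrow> (\<exists>r. \<forall>X\<in>U. \<forall>Y\<in>U. X \<noteq> Y \<longrightarrow> dS X Y = r)"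

end

theory Submission
  imports Defs "HOL-Combinatorics.Transposition"
begin

text \<open>Distinct planes through the line spanned by \<open>e0\<close> meet exactly in that line, so they are at
  subspace distance \<open>2 + 2 - 2 = 2\<close> from each other and at distance 2 from the zero space. For
  \<open>q \<ge> 3\<close> the planes spanned by \<open>e0\<close> and \<open>(0, 1, x)\<close>, \<open>x \<in> F\<^sub>q\<^sup>6\<close>, are at least
  \<open>3\<^sup>6 \<ge> 2\<^sup>9 - 1\<close> such planes in \<open>F\<^sub>q\<^sup>8\<close>. An equidistant family of size \<open>2\<^sup>m\<close> containing
  the zero space is a linear code: identify it with \<open>Pow {..<m}\<close>, the zero space with \<open>{}\<close>, and
  transport the symmetric difference. Translations are injective, so they map distinct pairs to
  distinct pairs and preserve the constant distance.\<close>

interpretation V: vector_space "fscale :: 'a::field \<Rightarrow> (nat \<Rightarrow> 'a) \<Rightarrow> _"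
  by (rule vector_space_fscale)

lemma obtain_bij_betw_Pow:
  assumes "finite U" "card U = 2 ^ m" "z \<in> U"
  obtains g where "bij_betw g (Pow {..<m}) U" "g {} = z"
proof -
  obtain h where h: "bij_betw h (Pow {..<m}) U"
    using assms finite_same_card_bij[of "Pow {..<m}" U] by (auto simp: card_Pow)
  then have "h {} \<in> U" by (auto dest: bij_betwE)
  then have "bij_betw (transpose (h {}) z \<circ> h) (Pow {..<m}) U"
    using h assms(3) by (auto intro: bij_betw_trans)
  then show thesis by (rule that) simp
qed

lemma boolean_group_on_card_power_of_two:
  assumes "finite U" "card U = 2 ^ m" "z \<in> U"
  obtains bp where "\<And>X Y. X \<in> U \<Longrightarrow> Y \<in> U \<Longrightarrow> bp X Y \<in> U"
    and "\<And>X Y Z. X \<in> U \<Longrightarrow> Y \<in> U \<Longrightarrow> Z \<in> U \<Longrightarrow> bp (bp X Y) Z = bp X (bp Y Z)"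
    and "\<And>X Y. bp X Y = bp Y X"
    and "\<And>X. X \<in> U \<Longrightarrow> bp z X = X"
    and "\<And>X. bp X X = z"
proof -
  obtain g where g: "bij_betw g (Pow {..<m}) U" and g0: "g {} = z"
    using obtain_bij_betw_Pow[OF assms] .
  define f where "f = inv_into (Pow {..<m}) g"
  have f: "f X \<in> Pow {..<m}" "g (f X) = X" if "X \<in> U" for X
    using that g unfolding f_def by (auto simp: bij_betw_def inv_into_into f_inv_into_f)
  have fg: "f (g S) = S" if "S \<in> Pow {..<m}" for S
    using that g unfolding f_def by (simp add: bij_betw_def)
  define bp where "bp X Y = g ((f X - f Y) \<union> (f Y - f X))" for X Y
  have f_bp: "f (bp X Y) = (f X - f Y) \<union> (f Y - f X)" if "X \<in> U" "Y \<in> U" for X Y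
    unfolding bp_def using that f by (intro fg) blast
  have closed: "bp X Y \<in> U" if "X \<in> U" "Y \<in> U" for X Y
    unfolding bp_def using that f g by (blast dest: bij_betwE)
  have assoc: "bp (bp X Y) Z = bp X (bp Y Z)" if "X \<in> U" "Y \<in> U" "Z \<in> U" for X Y Z
  proof -
    have "(f (bp X Y) - f Z) \<union> (f Z - f (bp X Y)) = (f X - f (bp Y Z)) \<union> (f (bp Y Z) - f X)"
      unfolding f_bp[OF that(1,2)] f_bp[OF that(2,3)] by blast
    then show ?thesis by (simp only: bp_def)
  qed
  have comm: "bp X Y = bp Y X" for X Y
    unfolding bp_def by (simp add: Un_commute)
  have unit: "bp z X = X" if "X \<in> U" for X
    using f[OF that] fg[of "{}"] g0 by (simp add: bp_def)
  have self_inverse: "bp X X = z" for X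
    using g0 by (simp add: bp_def)
  show thesis
    by (rule that[OF closed assoc comm unit self_inverse])
qed

lemma linear_code_if_equidistant:
  assumes "U \<subseteq> Pq T n" "zero_space \<in> U" "finite U" "card U = 2 ^ m" "equidistant U"
  shows "linear_code T n U"
proof -
  obtain bp where closed: "\<And>X Y. X \<in> U \<Longrightarrow> Y \<in> U \<Longrightarrow> bp X Y \<in> U"
    and assoc: "\<And>X Y Z. X \<in> U \<Longrightarrow> Y \<in> U \<Longrightarrow> Z \<in> U \<Longrightarrow> bp (bp X Y) Z = bp X (bp Y Z)"
    and comm: "\<And>X Y. bp X Y = bp Y X"
    and unit: "\<And>X. X \<in> U \<Longrightarrow> bp zero_space X = X"
    and self_inverse: "\<And>X. bp X X = zero_space"
    by (fact boolean_group_on_card_power_of_two[OF assms(3-4,2)])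
  have unit_right: "bp X zero_space = X" if "X \<in> U" for X
    using unit[OF that] comm[of X] by simp
  have undo: "bp (bp Y X) X = Y" if "Y \<in> U" "X \<in> U" for Y X
    using that by (simp add: assoc self_inverse unit_right)
  from assms(5) obtain r where r: "\<forall>X\<in>U. \<forall>Y\<in>U. X \<noteq> Y \<longrightarrow> dS X Y = r"
    unfolding equidistant_def by blast
  have isometry: "dS (bp Y1 X) (bp Y2 X) = dS Y1 Y2" if "Y1 \<in> U" "Y2 \<in> U" "X \<in> U" for Y1 Y2 X
  proof (cases "Y1 = Y2")
    case False
    then have "bp Y1 X \<noteq> bp Y2 X"
      using undo[OF that(1,3)] undo[OF that(2,3)] by metis
    then show ?thesis
      using r closed that False by simp
  qed (simp add: dS_def)
  show ?thesis
    unfolding linear_code_def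
  proof (intro conjI assms(1,2) exI[of _ bp] ballI)
    fix X assume "X \<in> U"
    then show "\<exists>Y\<in>U. bp X Y = zero_space"
      using self_inverse by blast
  qed (simp_all add: closed assoc unit unit_right self_inverse isometry, rule comm)
qed

definition e0 :: "nat \<Rightarrow> 'a::field" where
  "e0 i = (if i = 0 then 1 else 0)"

definition plane :: "(nat \<Rightarrow> 'a::field) \<Rightarrow> (nat \<Rightarrow> 'a) set" where
  "plane v = V.span {e0, v}"

lemma mem_plane_iff: "x \<in> plane v \<longleftrightarrow> (\<exists>k c. x = (\<lambda>i. k * e0 i + c * v i))"
proof -
  have "x - fscale k e0 = fscale c v \<longleftrightarrow> x = (\<lambda>i. k * e0 i + c * v i)" for k c
    by (auto simp: fscale_def fun_eq_iff algebra_simps)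
  then show ?thesis
    unfolding plane_def V.span_breakdown_eq V.span_singleton by blast
qed

lemma sdim_line: "sdim (V.span {e0 :: nat \<Rightarrow> 'a::field}) = 1"
proof -
  have "e0 \<noteq> (0 :: nat \<Rightarrow> 'a)"
    by (metis e0_def zero_fun_def zero_neq_one)
  then have "V.independent {e0 :: nat \<Rightarrow> 'a}"
    by (simp add: V.independent_insertI V.independent_empty)
  then show ?thesis
    unfolding sdim_def by (simp add: V.dim_eq_card_independent)
qed

lemma sdim_plane:
  assumes "v 0 = 0" "v 1 = 1"
  shows "sdim (plane v) = 2"
proof -
  have "v \<noteq> 0" "e0 \<noteq> v"
    using assms by (metis zero_fun_apply zero_neq_one, metis e0_def zero_neq_one)
  moreover have "e0 \<notin> V.span {v}"
  proof
    assume "e0 \<in> V.span {v}"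
    then obtain c where "e0 = fscale c v"
      by (auto simp: V.span_singleton)
    then have "e0 0 = c * v 0"
      by (metis fscale_def)
    then show False
      using assms(1) by (simp add: e0_def)
  qed
  ultimately have "V.independent {e0, v}"
    by (simp add: V.independent_insertI V.independent_empty)
  then show ?thesis
    unfolding sdim_def plane_def using \<open>e0 \<noteq> v\<close> by (simp add: V.dim_eq_card_independent)
qed

lemma plane_inter_plane:
  assumes "v 0 = 0" "v 1 = 1" "w 0 = 0" "w 1 = 1" "v \<noteq> w"
  shows "plane v \<inter> plane w = V.span {e0}"
proof
  show "V.span {e0} \<subseteq> plane v \<inter> plane w"
    unfolding plane_def by (auto intro: V.span_mono[THEN subsetD])
  show "plane v \<inter> plane w \<subseteq> V.span {e0}"
  proof
    fix x assume "x \<in> plane v \<inter> plane w"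
    then obtain k c k' d where x: "x = (\<lambda>i. k * e0 i + c * v i)" "x = (\<lambda>i. k' * e0 i + d * w i)"
      unfolding Int_iff mem_plane_iff by blast
    have "c = d"
      using fun_cong[OF x(1), of 1] fun_cong[OF x(2), of 1] assms by (simp add: e0_def)
    obtain i where "v i \<noteq> w i" using assms(5) by blast
    moreover have "c * v i = d * w i"
      using fun_cong[OF x(1), of i] fun_cong[OF x(2), of i] fun_cong[OF x(1), of 0]
        fun_cong[OF x(2), of 0] assms by (cases "i = 0") (auto simp: e0_def)
    ultimately have "c = 0" using \<open>c = d\<close> by auto
    then show "x \<in> V.span {e0}"
      using x(1) by (auto simp: V.span_singleton fscale_def)
  qed
qed

lemma inj_on_plane: "inj_on plane {v. v 0 = 0 \<and> v 1 = 1}"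
proof (rule inj_onI)
  fix v w :: "nat \<Rightarrow> 'a" assume v: "v \<in> {v. v 0 = 0 \<and> v 1 = 1}" and w: "w \<in> {v. v 0 = 0 \<and> v 1 = 1}"
    and "plane v = plane w"
  then have "w \<in> plane v" by (auto simp: plane_def V.span_base)
  then obtain k c where wv: "w = (\<lambda>i. k * e0 i + c * v i)" by (auto simp: mem_plane_iff)
  have "k = 0" "c = 1"
    using fun_cong[OF wv, of 0] fun_cong[OF wv, of 1] v w by (auto simp: e0_def)
  then show "v = w" using wv by (simp add: e0_def)
qed

lemma plane_in_Pq:
  assumes "v \<in> fvec n" "v 1 = 1"
  shows "plane v \<in> Pq TYPE('a::field) n"
proof -
  have "e0 \<in> fvec n"
    using assms by (auto simp: fvec_def e0_def intro: Nat.gr0I)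
  moreover have "V.subspace (fvec n :: (nat \<Rightarrow> 'a) set)"
    unfolding V.subspace_def fvec_def by (auto simp: fscale_def)
  ultimately have "plane v \<subseteq> fvec n"
    unfolding plane_def using assms(1) by (intro V.span_minimal) auto
  then show ?thesis unfolding Pq_def plane_def by auto
qed

lemma zero_space_eq_span_empty: "zero_space = V.span {}"
  by (simp add: zero_space_def zero_fun_def)

lemma zero_space_in_Pq: "zero_space \<in> Pq TYPE('a::field) n"
  unfolding Pq_def zero_space_eq_span_empty by (auto simp: fvec_def)

lemma sdim_zero_space: "sdim (zero_space :: (nat \<Rightarrow> 'a::field) set) = 0"
  using V.dim_span_eq_card_independent[OF V.independent_empty]
  unfolding sdim_def zero_space_eq_span_empty by simp

lemma zero_space_subset_plane: "zero_space \<subseteq> plane v"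
  unfolding zero_space_eq_span_empty plane_def by (rule V.span_mono) simp

lemma dS_sunflower:
  fixes W :: "(nat \<Rightarrow> 'a::field) set"
  assumes "W \<subseteq> {v. v 0 = 0 \<and> v 1 = 1}"
    and "X \<in> insert zero_space (plane ` W)" "Y \<in> insert zero_space (plane ` W)" "X \<noteq> Y"
  shows "dS X Y = 2"
proof -
  have zero_plane: "dS zero_space (plane v) = 2" "dS (plane v) zero_space = 2" if "v \<in> W" for v
  proof -
    have "sdim (plane v) = 2"
      using that assms(1) sdim_plane by blast
    then show "dS zero_space (plane v) = 2" "dS (plane v) zero_space = 2"
      using zero_space_subset_plane[of v] sdim_zero_space[where 'a = 'a]
      by (simp_all add: dS_def Int_absorb1 Int_absorb2)
  qed
  have plane_plane: "dS (plane v) (plane w) = 2" if "v \<in> W" "w \<in> W" "plane v \<noteq> plane w" for v w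
  proof -
    have "v 0 = 0" "v 1 = 1" "w 0 = 0" "w 1 = 1" "v \<noteq> w"
      using that assms(1) by auto
    then show ?thesis
      by (simp add: dS_def sdim_plane plane_inter_plane sdim_line)
  qed
  from assms(2-4) show ?thesis
    by (elim insertE imageE) (simp_all add: zero_plane plane_plane)
qed

lemma sunflower_code:
  assumes "W \<subseteq> {v \<in> fvec n. v 0 = 0 \<and> v 1 = 1}" "finite W" "card W = 2 ^ m - 1"
  defines "U \<equiv> insert zero_space (plane ` W)"
  shows "linear_code TYPE('a::field) n U" "equidistant U" "card U = 2 ^ m"
proof -
  have "zero_space \<notin> plane ` W"
  proof
    assume "zero_space \<in> plane ` W"
    then obtain v where "v \<in> W" "zero_space = plane v" by blast
    then show False
      using assms(1) sdim_plane[of v] sdim_zero_space[where 'a = 'a] by auto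
  qed
  moreover have "inj_on plane W"
    using inj_on_plane by (rule inj_on_subset) (use assms(1) in blast)
  ultimately show card_U: "card U = 2 ^ m"
    unfolding U_def using assms(2,3) by (simp add: card_image)
  have "W \<subseteq> {v. v 0 = 0 \<and> v 1 = 1}"
    using assms(1) by blast
  then show "equidistant U"
    unfolding equidistant_def U_def by (intro exI[of _ 2] ballI impI) (rule dS_sunflower)
  have "plane v \<in> Pq TYPE('a) n" if "v \<in> W" for v
    using that assms(1) by (intro plane_in_Pq) auto
  then have "U \<subseteq> Pq TYPE('a) n"
    unfolding U_def using zero_space_in_Pq by blast
  moreover have "zero_space \<in> U" "finite U"
    unfolding U_def using assms(2) by simp_all
  ultimately show "linear_code TYPE('a) n U"
    using card_U \<open>equidistant U\<close> by (rule linear_code_if_equidistant)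
qed

definition list_vec :: "'a::zero list \<Rightarrow> nat \<Rightarrow> 'a" where
  "list_vec ys i = (if i < length ys then ys ! i else 0)"

lemma inj_on_list_vec: "inj_on list_vec {ys. length ys = n}"
proof (rule inj_onI)
  fix xs ys :: "'a list"
  assume "xs \<in> {ys. length ys = n}" "ys \<in> {ys. length ys = n}" "list_vec xs = list_vec ys"
  then show "xs = ys"
    by (metis (mono_tags, lifting) list_vec_def mem_Collect_eq nth_equalityI)
qed

lemma card_list_vec_Cons_Cons:
  "card ((\<lambda>xs. list_vec (a # b # xs)) ` {xs :: 'a::{finite,zero} list. length xs = k}) =
    card (UNIV :: 'a set) ^ k"
proof -
  have "inj_on (\<lambda>xs. list_vec (a # b # xs)) {xs :: 'a list. length xs = k}"
  proof (rule inj_onI)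
    fix xs ys :: "'a list"
    assume "xs \<in> {xs. length xs = k}" "ys \<in> {xs. length xs = k}"
      and "list_vec (a # b # xs) = list_vec (a # b # ys)"
    then have "a # b # xs = a # b # ys"
      by (intro inj_onD[OF inj_on_list_vec[of "k + 2"]]) auto
    then show "xs = ys" by simp
  qed
  then show ?thesis
    using card_lists_length_eq[of "UNIV :: 'a set" k] by (simp add: card_image)
qed

theorem corollary3:
  assumes "card (UNIV :: 'a::{finite,field} set) > 2"
  shows "\<exists>n\<ge>3. \<exists>U. linear_code TYPE('a) n U \<and> equidistant U \<and> card U \<ge> 2 ^ (n + 1)"
proof -
  define D where "D = (\<lambda>xs. list_vec (0 # 1 # xs)) ` {xs :: 'a list. length xs = 6}"
  have "(2::nat) ^ 9 - 1 \<le> 3 ^ 6" by simp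
  also have "\<dots> \<le> card (UNIV :: 'a set) ^ 6"
    using assms by (intro power_mono) auto
  also have "\<dots> = card D"
    unfolding D_def by (rule card_list_vec_Cons_Cons[symmetric])
  finally obtain W where W: "W \<subseteq> D" "card W = 2 ^ 9 - 1" "finite W"
    by (rule obtain_subset_with_card_n)
  have "D \<subseteq> {v \<in> fvec 8. v 0 = 0 \<and> v 1 = 1}"
    by (auto simp: D_def list_vec_def fvec_def)
  with W have "W \<subseteq> {v \<in> fvec 8. v 0 = 0 \<and> v 1 = 1}" by blast
  from sunflower_code[OF this W(3,2)] show ?thesis
    by (intro exI[of _ 8] conjI exI[of _ "insert zero_space (plane ` W)"]) simp_all
qed

end
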